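(* Let $n\ge 2$, $c_1,\dots,c_n>0$, and fix $i\in\{1,\dots,n\}$. Let $Q_i\in\mathbb{R}^{n\times n}$ be the symmetric matrix with $(Q_i)_{ii}=\frac{n-2}{c_i^2}$, $(Q_i)_{jj}=\frac{1}{c_j^2}$ and $(Q_i)_{ij}=(Q_i)_{ji}=-\frac{1}{c_ic_j}$ for $j\neq i$, and all other entries $0$. Let $c_o=\max_{j\neq i}c_j$ and $c_*=\min_{j\neq i}c_j$, and $S=\sum_{j=1,j\neq i}^n\frac{1}{c_j^2}$. Then every eigenvalue $\lambda$ of $Q_i$ satisfies $$\frac{1}{2}\left(\frac{n-2}{c_i^2}+\frac{1}{c_o^2}-\frac{1}{c_i}\sqrt{\left(\frac{n-2}{c_i}-\frac{c_i}{c_o^2}\right)^2+4S}\right)\ \le\ \lambda\ \le\ \frac{1}{2}\left(\frac{n-2}{c_i^2}+\frac{1}{c_*^2}+\frac{1}{c_i}\sqrt{\left(\frac{n-2}{c_i}-\frac{c_i}{c_*^2}\right)^2+4S}\right).$$ *)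

theory Defs
  imports "Jordan_Normal_Form.Char_Poly"
begin

text \<open>The matrix Q_i (0-based indices: rows/columns 0..n-1, fixed index i < n).\<close>
definition Qmat :: "nat \<Rightarrow> (nat \<Rightarrow> real) \<Rightarrow> nat \<Rightarrow> real mat" where
  "Qmat n c i = mat n n (\<lambda>(j, k).
     if j = k then (if j = i then (real n - 2) / (c i)\<^sup>2 else 1 / (c j)\<^sup>2)
     else if j = i \<or> k = i then - 1 / (c j * c k)
     else 0)"

end

theory Submission
  imports Defs
begin

text \<open>
  Q is an arrowhead matrix: diagonal entries d_k = 1/c_k^2 off the centre i, centre entry
  a = (n-2)/c_i^2, and spokes -b_k with b_k = 1/(c_i c_k). If lam exceeds every d_k, the spoke rows
  of an eigenvector give y_k = -b_k x / (lam - d_k), so the centre row becomes the secular equation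
  lam - a = sum_k b_k^2 / (lam - d_k). Bounding d_k by M turns this into
  (lam - a)(lam - M) <= sum_k b_k^2, i.e. lam lies below the larger root of that quadratic.
  Negating the whole system gives the lower bound.
\<close>

lemma arrowhead_eigenvalue_upper_bound:
  fixes K :: "'a set" and d b y :: "'a \<Rightarrow> real" and a x lam M :: real
  assumes diag_le: "\<And>k. k \<in> K \<Longrightarrow> d k \<le> M"
    and row: "\<And>k. k \<in> K \<Longrightarrow> d k * y k - b k * x = lam * y k"
    and row_centre: "a * x - (\<Sum>k\<in>K. b k * y k) = lam * x"
    and nonzero: "x \<noteq> 0 \<or> (\<exists>k\<in>K. y k \<noteq> 0)"
  shows "lam \<le> (a + M) / 2 + sqrt (((a - M) / 2)\<^sup>2 + (\<Sum>k\<in>K. (b k)\<^sup>2))"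
proof (cases "lam \<le> M")
  case True
  have "\<bar>a - M\<bar> / 2 \<le> sqrt (((a - M) / 2)\<^sup>2 + (\<Sum>k\<in>K. (b k)\<^sup>2))"
    by (rule real_le_rsqrt) (auto intro: sum_nonneg simp: power_divide)
  moreover have "M \<le> (a + M) / 2 + \<bar>a - M\<bar> / 2"
    by (simp add: abs_if field_simps)
  ultimately show ?thesis
    using True by linarith
next
  case False
  then have gap: "lam - d k > 0" if "k \<in> K" for k
    using diag_le[OF that] by linarith
  have y_eq: "y k = - b k * x / (lam - d k)" if "k \<in> K" for k
    using row[OF that] gap[OF that] by (simp add: field_simps)
  have "x \<noteq> 0"
    using nonzero y_eq by force
  have "(a - lam) * x = (\<Sum>k\<in>K. b k * y k)"
    using row_centre by (simp add: algebra_simps)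
  also have "\<dots> = - x * (\<Sum>k\<in>K. (b k)\<^sup>2 / (lam - d k))"
    by (simp add: y_eq sum_distrib_left power2_eq_square sum_negf mult_ac cong: sum.cong)
  finally have "x * (lam - a - (\<Sum>k\<in>K. (b k)\<^sup>2 / (lam - d k))) = 0"
    by (simp add: algebra_simps)
  with \<open>x \<noteq> 0\<close> have "lam - a = (\<Sum>k\<in>K. (b k)\<^sup>2 / (lam - d k))"
    by simp
  also have "\<dots> \<le> (\<Sum>k\<in>K. (b k)\<^sup>2 / (lam - M))"
    using diag_le gap False by (intro sum_mono divide_left_mono) auto
  also have "\<dots> = (\<Sum>k\<in>K. (b k)\<^sup>2) / (lam - M)"
    by (simp add: sum_divide_distrib)
  finally have "(lam - a) * (lam - M) \<le> (\<Sum>k\<in>K. (b k)\<^sup>2)"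
    using False by (simp add: pos_le_divide_eq)
  then have "(lam - (a + M) / 2)\<^sup>2 \<le> ((a - M) / 2)\<^sup>2 + (\<Sum>k\<in>K. (b k)\<^sup>2)"
    by (simp add: power2_eq_square field_simps)
  then have "lam - (a + M) / 2 \<le> sqrt (((a - M) / 2)\<^sup>2 + (\<Sum>k\<in>K. (b k)\<^sup>2))"
    by (rule real_le_rsqrt)
  then show ?thesis by simp
qed

lemma arrowhead_eigenvalue_lower_bound:
  fixes K :: "'a set" and d b y :: "'a \<Rightarrow> real" and a x lam m :: real
  assumes diag_ge: "\<And>k. k \<in> K \<Longrightarrow> m \<le> d k"
    and row: "\<And>k. k \<in> K \<Longrightarrow> d k * y k - b k * x = lam * y k"
    and row_centre: "a * x - (\<Sum>k\<in>K. b k * y k) = lam * x"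
    and nonzero: "x \<noteq> 0 \<or> (\<exists>k\<in>K. y k \<noteq> 0)"
  shows "(a + m) / 2 - sqrt (((a - m) / 2)\<^sup>2 + (\<Sum>k\<in>K. (b k)\<^sup>2)) \<le> lam"
proof -
  have negate: "((- a - - m) / 2)\<^sup>2 = ((a - m) / 2)\<^sup>2"
    by (simp add: power2_eq_square algebra_simps)
  have "- lam \<le> (- a + - m) / 2 + sqrt (((- a - - m) / 2)\<^sup>2 + (\<Sum>k\<in>K. (- b k)\<^sup>2))"
  proof (rule arrowhead_eigenvalue_upper_bound[where d = "\<lambda>k. - d k" and y = y and x = x])
    show "- d k \<le> - m" if "k \<in> K" for k
      using diag_ge[OF that] by simp
    show "- d k * y k - - b k * x = - lam * y k" if "k \<in> K" for k
      using row[OF that] by simp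
    show "- a * x - (\<Sum>k\<in>K. - b k * y k) = - lam * x"
      using row_centre by (simp add: sum_negf)
  qed (fact nonzero)
  then show ?thesis
    unfolding power2_minus negate by argo
qed

lemma sqrt_discriminant_rescale:
  fixes p M S e :: real
  assumes "e > 0"
  shows "sqrt (((p / e\<^sup>2 - M) / 2)\<^sup>2 + S / e\<^sup>2) = (1 / e) * sqrt ((p / e - e * M)\<^sup>2 + 4 * S) / 2"
proof -
  have "((p / e\<^sup>2 - M) / 2)\<^sup>2 + S / e\<^sup>2 = ((p / e - e * M)\<^sup>2 + 4 * S) / (2 * e)\<^sup>2"
    using assms by (simp add: field_simps power2_eq_square)
  then have "sqrt (((p / e\<^sup>2 - M) / 2)\<^sup>2 + S / e\<^sup>2) = sqrt ((p / e - e * M)\<^sup>2 + 4 * S) / \<bar>2 * e\<bar>"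
    by (simp only: real_sqrt_divide real_sqrt_abs)
  then show ?thesis
    using assms by simp
qed

lemma eigenvalue_Qmat_equations:
  fixes c :: "nat \<Rightarrow> real"
  assumes "i < n" and "eigenvalue (Qmat n c i) lam"
  obtains x :: "nat \<Rightarrow> real" where
    "\<And>k. k \<in> {j. j < n \<and> j \<noteq> i} \<Longrightarrow> 1 / (c k)\<^sup>2 * x k - 1 / (c i * c k) * x i = lam * x k"
    and "(real n - 2) / (c i)\<^sup>2 * x i - (\<Sum>k\<in>{j. j < n \<and> j \<noteq> i}. 1 / (c i * c k) * x k) = lam * x i"
    and "x i \<noteq> 0 \<or> (\<exists>k\<in>{j. j < n \<and> j \<noteq> i}. x k \<noteq> 0)"
proof -
  define K where "K = {j. j < n \<and> j \<noteq> i}"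
  define Q where "Q = Qmat n c i"
  obtain v where v: "v \<in> carrier_vec n" "v \<noteq> 0\<^sub>v n" "Q *\<^sub>v v = lam \<cdot>\<^sub>v v"
    using assms(2) unfolding eigenvalue_def eigenvector_def Q_def Qmat_def by auto
  have row_sum: "(\<Sum>k\<in>{0..<n}. Q $$ (j, k) * v $ k) = lam * v $ j" if "j < n" for j
  proof -
    have "(Q *\<^sub>v v) $ j = (\<Sum>k\<in>{0..<n}. Q $$ (j, k) * v $ k)"
      using that v(1) unfolding Q_def Qmat_def by (simp add: scalar_prod_def)
    then show ?thesis
      using v(3) v(1) that by simp
  qed
  have entry: "Q $$ (j, k) = (if j = k then (if j = i then (real n - 2) / (c i)\<^sup>2 else 1 / (c j)\<^sup>2)
      else if j = i \<or> k = i then - 1 / (c j * c k) else 0)" if "j < n" "k < n" for j k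
    using that unfolding Q_def Qmat_def by simp
  have K_decomp: "{0..<n} = insert i K" "i \<notin> K" "finite K"
    using assms(1) unfolding K_def by auto
  show ?thesis
  proof
    show "1 / (c k)\<^sup>2 * v $ k - 1 / (c i * c k) * v $ i = lam * v $ k" if "k \<in> {j. j < n \<and> j \<noteq> i}" for k
    proof -
      have "(\<Sum>j\<in>{0..<n}. Q $$ (k, j) * v $ j)
          = (\<Sum>j\<in>{0..<n}. (if j = k then v $ k / (c k)\<^sup>2 else 0) + (if j = i then - v $ i / (c k * c i) else 0))"
        using that by (intro sum.cong) (auto simp: entry)
      also have "\<dots> = v $ k / (c k)\<^sup>2 - v $ i / (c k * c i)"
        using that assms(1) by (simp add: sum.distrib)
      finally show ?thesis
        using row_sum[of k] that by (simp add: mult.commute)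
    qed
    have "(\<Sum>k\<in>K. Q $$ (i, k) * v $ k) = (\<Sum>k\<in>K. - (1 / (c i * c k) * v $ k))"
      using assms(1) by (intro sum.cong) (auto simp: entry K_def)
    then have "(\<Sum>k\<in>{0..<n}. Q $$ (i, k) * v $ k) = (real n - 2) / (c i)\<^sup>2 * v $ i - (\<Sum>k\<in>K. 1 / (c i * c k) * v $ k)"
      using K_decomp assms(1) by (simp add: entry sum_negf)
    then show "(real n - 2) / (c i)\<^sup>2 * v $ i - (\<Sum>k\<in>{j. j < n \<and> j \<noteq> i}. 1 / (c i * c k) * v $ k) = lam * v $ i"
      using row_sum[OF assms(1)] unfolding K_def by simp
    show "v $ i \<noteq> 0 \<or> (\<exists>k\<in>{j. j < n \<and> j \<noteq> i}. v $ k \<noteq> 0)"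
    proof (rule ccontr)
      assume "\<not> ?thesis"
      then have "v = 0\<^sub>v n"
        using v(1) by (intro eq_vecI) auto
      with v(2) show False ..
    qed
  qed
qed

theorem mainTheorem6:
  fixes n i :: nat and c :: "nat \<Rightarrow> real" and lam :: real
  assumes "n \<ge> 2"
    and "\<And>j. j < n \<Longrightarrow> c j > 0"
    and "i < n"
    and "eigenvalue (Qmat n c i) lam"
  defines "co \<equiv> Max {c j | j. j < n \<and> j \<noteq> i}"
    and "cs \<equiv> Min {c j | j. j < n \<and> j \<noteq> i}"
    and "S \<equiv> (\<Sum>j\<in>{j. j < n \<and> j \<noteq> i}. 1 / (c j)\<^sup>2)"
  shows "(1/2) * ((real n - 2) / (c i)\<^sup>2 + 1 / co\<^sup>2
            - (1 / c i) * sqrt (((real n - 2) / c i - c i / co\<^sup>2)\<^sup>2 + 4 * S)) \<le> lam \<and>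
         lam \<le> (1/2) * ((real n - 2) / (c i)\<^sup>2 + 1 / cs\<^sup>2
            + (1 / c i) * sqrt (((real n - 2) / c i - c i / cs\<^sup>2)\<^sup>2 + 4 * S))"
proof -
  define K where "K = {j. j < n \<and> j \<noteq> i}"
  obtain x where row: "\<And>k. k \<in> K \<Longrightarrow> 1 / (c k)\<^sup>2 * x k - 1 / (c i * c k) * x i = lam * x k"
    and row_centre: "(real n - 2) / (c i)\<^sup>2 * x i - (\<Sum>k\<in>K. 1 / (c i * c k) * x k) = lam * x i"
    and nonzero: "x i \<noteq> 0 \<or> (\<exists>k\<in>K. x k \<noteq> 0)"
    using eigenvalue_Qmat_equations[OF assms(3,4)] unfolding K_def by blast
  have "finite K" and c_pos: "\<And>k. k \<in> K \<Longrightarrow> c k > 0" and "c i > 0"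
    using assms(2,3) unfolding K_def by auto
  have "(if i = 0 then 1 else 0) \<in> K"
    using assms(1,3) unfolding K_def by auto
  then have "K \<noteq> {}"
    by blast
  have co: "co = Max (c ` K)" and cs: "cs = Min (c ` K)"
    unfolding co_def cs_def K_def by (simp_all add: image_Collect)
  have "cs \<in> c ` K"
    unfolding cs using \<open>finite K\<close> \<open>K \<noteq> {}\<close> by simp
  then have "cs > 0"
    using c_pos by auto
  have diag_lower: "1 / co\<^sup>2 \<le> 1 / (c k)\<^sup>2" and diag_upper: "1 / (c k)\<^sup>2 \<le> 1 / cs\<^sup>2" if "k \<in> K" for k
  proof -
    have "cs \<le> c k" "c k \<le> co"
      using that \<open>finite K\<close> unfolding co cs by simp_all
    then show "1 / co\<^sup>2 \<le> 1 / (c k)\<^sup>2" "1 / (c k)\<^sup>2 \<le> 1 / cs\<^sup>2"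
      using c_pos[OF that] \<open>cs > 0\<close> by (auto intro!: divide_left_mono power_mono)
  qed
  have "(\<Sum>k\<in>K. (1 / (c i * c k))\<^sup>2) = S / (c i)\<^sup>2"
    unfolding S_def K_def[symmetric] by (simp add: sum_divide_distrib power_mult_distrib power_one_over mult.commute)
  then show ?thesis
    using arrowhead_eigenvalue_lower_bound[OF diag_lower row row_centre nonzero]
      arrowhead_eigenvalue_upper_bound[OF diag_upper row row_centre nonzero]
      sqrt_discriminant_rescale[OF \<open>c i > 0\<close>, of "real n - 2" "1 / co\<^sup>2" S]
      sqrt_discriminant_rescale[OF \<open>c i > 0\<close>, of "real n - 2" "1 / cs\<^sup>2" S]
    by (simp add: field_simps)
qed

end
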